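(* Let $K, L$ be compact convex subsets of $\mathbb{R}^n$ and let $\psi: \mathbb{R}^n \to \mathbb{R}^n$ be a nonsingular linear transformation. Then, for every unit vector $u$, $L_u$ contains a translate of $K_u$ if and only if, for every unit vector $u$, $(\psi L)_u$ contains a translate of $(\psi K)_u$.
   Context: For a set $S \subseteq \mathbb{R}^n$ and a unit vector $u$, $S_u$ denotes the orthogonal projection of $S$ onto the hyperplane $u^\perp$. "$A$ contains a translate of $B$" means $B + w \subseteq A$ for some vector $w$ (in $u^\perp$). *)

theory Defs
  imports "HOL-Analysis.Analysis"
begin

definition proj_hyp :: "'a::euclidean_space \<Rightarrow> 'a set \<Rightarrow> 'a set" where
  "proj_hyp u S = (\<lambda>x. x - (x \<bullet> u) *\<^sub>R u) ` S"

definition contains_translate :: "'a::euclidean_space \<Rightarrow> 'a set \<Rightarrow> 'a set \<Rightarrow> bool" where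
  "contains_translate u A B \<longleftrightarrow> (\<exists>w. w \<bullet> u = 0 \<and> (\<lambda>x. x + w) ` B \<subseteq> A)"

end

theory Submission
  imports Defs
begin

text \<open>
  For a unit vector u, the projection of L onto the hyperplane orthogonal
  to u contains a translate of the projection of K exactly when some translate K + w
  lies in the cylinder L + span{u}, i.e. every point of K + w can be moved into L along
  the line direction u.  This "fits along a line" condition makes sense for any
  direction v in any real vector space, is unchanged when v is rescaled by a non-zero
  factor, and is transported by every linear bijection psi: K fits into L along v iff
  psi K fits into psi L along psi v.  Hence quantifying over all unit vectors is the
  same as quantifying over all non-zero directions, and psi permutes the non-zero
  directions, which yields the theorem.
\<close>

definition fits_along :: "'a::real_vector set \<Rightarrow> 'a set \<Rightarrow> 'a \<Rightarrow> bool" where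
  "fits_along K L v \<longleftrightarrow> (\<exists>w. \<forall>x\<in>K. \<exists>t. x + w + t *\<^sub>R v \<in> L)"

lemma contains_translate_proj_iff_fits_along:
  fixes u :: "'a::euclidean_space"
  assumes "norm u = 1"
  shows "contains_translate u (proj_hyp u L) (proj_hyp u K) \<longleftrightarrow> fits_along K L u"
proof
  assume "contains_translate u (proj_hyp u L) (proj_hyp u K)"
  then obtain w where w: "(\<lambda>x. x + w) ` proj_hyp u K \<subseteq> proj_hyp u L"
    unfolding contains_translate_def by blast
  have "\<exists>t. x + w + t *\<^sub>R u \<in> L" if "x \<in> K" for x
  proof -
    have "x - (x \<bullet> u) *\<^sub>R u + w \<in> proj_hyp u L"
      using w that unfolding proj_hyp_def by blast
    then obtain y where y: "y \<in> L" "x - (x \<bullet> u) *\<^sub>R u + w = y - (y \<bullet> u) *\<^sub>R u"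
      unfolding proj_hyp_def by blast
    then have "x + w + ((y \<bullet> u) - (x \<bullet> u)) *\<^sub>R u = y"
      by (simp add: algebra_simps)
    with y(1) show ?thesis by metis
  qed
  then show "fits_along K L u" unfolding fits_along_def by blast
next
  have uu: "u \<bullet> u = 1" using assms by (simp add: dot_square_norm)
  assume "fits_along K L u"
  then obtain w where w: "\<forall>x\<in>K. \<exists>t. x + w + t *\<^sub>R u \<in> L"
    unfolding fits_along_def by blast
  \<comment> \<open>Only the component of w orthogonal to u matters for the projections.\<close>
  define w' where "w' = w - (w \<bullet> u) *\<^sub>R u"
  have w'_orth: "w' \<bullet> u = 0" unfolding w'_def using uu by (simp add: inner_diff_left)
  have "(\<lambda>x. x + w') ` proj_hyp u K \<subseteq> proj_hyp u L"
  proof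
    fix z assume "z \<in> (\<lambda>x. x + w') ` proj_hyp u K"
    then obtain x where x: "x \<in> K" "z = x - (x \<bullet> u) *\<^sub>R u + w'"
      unfolding proj_hyp_def by blast
    obtain t where t: "x + w + t *\<^sub>R u \<in> L" using w x(1) by blast
    let ?y = "x + w + t *\<^sub>R u"
    have "?y \<bullet> u = x \<bullet> u + w \<bullet> u + t" using uu by (simp add: inner_add_left)
    then have "?y - (?y \<bullet> u) *\<^sub>R u = z" unfolding x(2) w'_def by (simp add: algebra_simps)
    with t show "z \<in> proj_hyp u L" unfolding proj_hyp_def by force
  qed
  with w'_orth show "contains_translate u (proj_hyp u L) (proj_hyp u K)"
    unfolding contains_translate_def by blast
qed

lemma fits_along_scaleR:
  assumes "c \<noteq> 0"
  shows "fits_along K L (c *\<^sub>R v) \<longleftrightarrow> fits_along K L v"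
proof
  assume "fits_along K L (c *\<^sub>R v)"
  then show "fits_along K L v" unfolding fits_along_def by (metis scaleR_scaleR)
next
  assume "fits_along K L v"
  moreover have "t *\<^sub>R v = (t / c) *\<^sub>R (c *\<^sub>R v)" for t using assms by simp
  ultimately show "fits_along K L (c *\<^sub>R v)" unfolding fits_along_def by metis
qed

lemma fits_along_unit_iff_nonzero:
  "(\<forall>u::'a::real_normed_vector. norm u = 1 \<longrightarrow> fits_along K L u) \<longleftrightarrow>
   (\<forall>v. v \<noteq> 0 \<longrightarrow> fits_along K L v)"
proof safe
  fix v :: 'a
  assume units: "\<forall>u. norm u = 1 \<longrightarrow> fits_along K L u" and "v \<noteq> 0"
  then have "fits_along K L (inverse (norm v) *\<^sub>R v)"
    by (simp add: norm_sgn[unfolded sgn_div_norm] divide_inverse_commute)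
  with \<open>v \<noteq> 0\<close> show "fits_along K L v" using fits_along_scaleR[of "inverse (norm v)" K L v] by simp
next
  fix u :: 'a
  assume "\<forall>v. v \<noteq> 0 \<longrightarrow> fits_along K L v" "norm u = 1"
  then show "fits_along K L u" by (metis norm_zero zero_neq_one)
qed

lemma fits_along_linear_image:
  assumes lin: "linear \<psi>" and bij: "bij \<psi>"
  shows "fits_along (\<psi> ` K) (\<psi> ` L) (\<psi> v) \<longleftrightarrow> fits_along K L v"
proof
  assume "fits_along (\<psi> ` K) (\<psi> ` L) (\<psi> v)"
  then obtain w where w: "\<forall>x\<in>\<psi> ` K. \<exists>t. x + w + t *\<^sub>R \<psi> v \<in> \<psi> ` L"
    unfolding fits_along_def by blast
  obtain w0 where w0: "w = \<psi> w0" using bij by (metis bij_pointE)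
  have "\<exists>t. x + w0 + t *\<^sub>R v \<in> L" if "x \<in> K" for x
  proof -
    obtain t where "\<psi> x + w + t *\<^sub>R \<psi> v \<in> \<psi> ` L" using w \<open>x \<in> K\<close> by blast
    moreover have "\<psi> x + w + t *\<^sub>R \<psi> v = \<psi> (x + w0 + t *\<^sub>R v)"
      using w0 lin by (simp add: linear_add linear_scale)
    ultimately show ?thesis using bij by (metis bij_is_inj inj_image_mem_iff)
  qed
  then show "fits_along K L v" unfolding fits_along_def by blast
next
  assume "fits_along K L v"
  then obtain w where w: "\<forall>x\<in>K. \<exists>t. x + w + t *\<^sub>R v \<in> L"
    unfolding fits_along_def by blast
  have "\<exists>t. \<psi> x + \<psi> w + t *\<^sub>R \<psi> v \<in> \<psi> ` L" if "x \<in> K" for x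
  proof -
    obtain t where "x + w + t *\<^sub>R v \<in> L" using w \<open>x \<in> K\<close> by blast
    moreover have "\<psi> x + \<psi> w + t *\<^sub>R \<psi> v = \<psi> (x + w + t *\<^sub>R v)"
      using lin by (simp add: linear_add linear_scale)
    ultimately show ?thesis by (metis imageI)
  qed
  then show "fits_along (\<psi> ` K) (\<psi> ` L) (\<psi> v)" unfolding fits_along_def by blast
qed

text \<open>Since a linear bijection permutes the non-zero vectors, fitting along every
  non-zero direction is invariant under it.\<close>
lemma fits_along_all_directions_linear_image:
  assumes lin: "linear \<psi>" and bij: "bij \<psi>"
  shows "(\<forall>v. v \<noteq> 0 \<longrightarrow> fits_along K L v) \<longleftrightarrow>
         (\<forall>v. v \<noteq> 0 \<longrightarrow> fits_along (\<psi> ` K) (\<psi> ` L) v)"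
proof -
  have zero_iff: "\<psi> v = 0 \<longleftrightarrow> v = 0" for v
    using lin bij by (metis bij_is_inj inj_eq linear_0)
  have "(\<forall>v. v \<noteq> 0 \<longrightarrow> fits_along (\<psi> ` K) (\<psi> ` L) v) \<longleftrightarrow>
        (\<forall>v. \<psi> v \<noteq> 0 \<longrightarrow> fits_along (\<psi> ` K) (\<psi> ` L) (\<psi> v))"
    using bij by (metis bij_pointE)
  then show ?thesis using zero_iff fits_along_linear_image[OF lin bij] by simp
qed

theorem proposition4p2:
  fixes K L :: "'a::euclidean_space set" and \<psi> :: "'a \<Rightarrow> 'a"
  assumes "compact K" "convex K" "compact L" "convex L"
    and "linear \<psi>" "inj \<psi>"
  shows "(\<forall>u. norm u = 1 \<longrightarrow> contains_translate u (proj_hyp u L) (proj_hyp u K)) \<longleftrightarrow>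
         (\<forall>u. norm u = 1 \<longrightarrow> contains_translate u (proj_hyp u (\<psi> ` L)) (proj_hyp u (\<psi> ` K)))"
proof -
  have bij: "bij \<psi>"
    using assms(5,6) by (simp add: bij_def linear_inj_imp_surj)
  have "(\<forall>u. norm u = 1 \<longrightarrow> contains_translate u (proj_hyp u L) (proj_hyp u K)) \<longleftrightarrow>
        (\<forall>v. v \<noteq> 0 \<longrightarrow> fits_along K L v)"
    using contains_translate_proj_iff_fits_along fits_along_unit_iff_nonzero by (metis (no_types))
  also have "\<dots> \<longleftrightarrow> (\<forall>v. v \<noteq> 0 \<longrightarrow> fits_along (\<psi> ` K) (\<psi> ` L) v)"
    using fits_along_all_directions_linear_image[OF assms(5) bij] .
  also have "\<dots> \<longleftrightarrow>
      (\<forall>u. norm u = 1 \<longrightarrow> contains_translate u (proj_hyp u (\<psi> ` L)) (proj_hyp u (\<psi> ` K)))"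
    using contains_translate_proj_iff_fits_along fits_along_unit_iff_nonzero by (metis (no_types))
  finally show ?thesis .
qed

end
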